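(* Let $c\in\mathbb{C}^n$, let $\rho(z)=z+c$ be the corresponding translation of $\mathbb{C}^{n}$, let $d\geq 1$ be an integer, and let $V\subseteq\mathcal{O}_{d}(\mathbb{C}^{n})$ be a complex linear subspace such that $g\circ\rho=g$ for every $g\in V$. If \[ \dim V \geq \dim\mathcal{O}_{d}(\mathbb{C}^{n})-\binom{n+d-1}{d-1}+1, \] then $c=0$.
   Context: $\mathcal{O}_d(\mathbb{C}^n)$ denotes the space of holomorphic functions $f$ on $\mathbb{C}^n$ with $|f(z)|\leq C(1+|z|)^d$ for some constant $C$; equivalently, the space of polynomials on $\mathbb{C}^n$ of degree at most $d$, which has dimension $\binom{n+d}{d}$. *)

theory Defs
  imports "HOL-Analysis.Analysis" "HOL-Library.Function_Algebras"
begin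

definition fscale :: "complex \<Rightarrow> ('a \<Rightarrow> complex) \<Rightarrow> ('a \<Rightarrow> complex)" where
  "fscale a f = (\<lambda>z. a * f z)"

lemma vector_space_fscale: "vector_space fscale"
  by unfold_locales (auto simp: fscale_def algebra_simps fun_eq_iff)

text \<open>O_d(C^n): polynomial functions on C^n of total degree at most d,
  C^n being rendered as complex^'n with n = CARD('n).\<close>
definition Od :: "nat \<Rightarrow> (complex^'n \<Rightarrow> complex) set" where
  "Od d = {f. \<exists>a :: ('n \<Rightarrow> nat) \<Rightarrow> complex.
     f = (\<lambda>z. \<Sum>\<alpha>\<in>{\<alpha>::'n \<Rightarrow> nat. sum \<alpha> UNIV \<le> d}. a \<alpha> * (\<Prod>i\<in>UNIV. (z $ i) ^ (\<alpha> i)))}"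

end

theory Submission
  imports Defs
begin

text \<open>
  Suppose \<open>c $ k \<noteq> 0\<close>. The space \<open>W = z\<^sub>k O\<^sub>d\<^sub>-\<^sub>1\<close> meets \<open>V\<close> only in \<open>0\<close>: a polynomial
  vanishing on the hyperplane \<open>z\<^sub>k = 0\<close> and invariant under translation by \<open>c\<close> restricts,
  on each line \<open>w + t c\<close> with \<open>w\<^sub>k = 0\<close>, to a univariate polynomial vanishing at every
  \<open>t \<in> \<nat>\<close>, hence vanishes identically. So \<open>dim V + dim W \<le> dim O\<^sub>d\<close>, and it remains to see
  \<open>dim W \<ge> binom(n+d-1, d-1)\<close>. Multiplication by \<open>z\<^sub>k\<close> is injective, and the polynomials of
  degree \<open>\<le> m\<close> in a set \<open>S\<close> of variables span at least \<open>binom(|S|+m, m)\<close> dimensions, by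
  induction on \<open>S\<close>: those of degree \<open>\<le> m+1\<close> in \<open>S \<union> {k}\<close> contain the ones in \<open>S\<close>, which do
  not depend on \<open>z\<^sub>k\<close>, and \<open>z\<^sub>k\<close> times those of degree \<open>\<le> m\<close> in \<open>S \<union> {k}\<close>, which vanish on
  \<open>z\<^sub>k = 0\<close>; the two spans meet only in \<open>0\<close>, and Pascal's rule gives the count.
\<close>

context vector_space
begin

lemma independent_Un:
  assumes A: "independent A" and B: "independent B" and AB: "span A \<inter> span B \<subseteq> {0}"
  shows "independent (A \<union> B)"
  unfolding independent_explicit_finite_subsets
proof (intro allI impI ballI)
  fix S u v
  assume S: "S \<subseteq> A \<union> B" "finite S" and sum_S: "(\<Sum>v\<in>S. scale (u v) v) = 0" and "v \<in> S"
  define SA SB where "SA = S \<inter> A" and "SB = S - A"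
  have SA: "finite SA" "SA \<subseteq> A" and SB: "finite SB" "SB \<subseteq> B"
    using S by (auto simp: SA_def SB_def)
  have SA_SB: "(\<Sum>v\<in>SA. scale (u v) v) = - (\<Sum>v\<in>SB. scale (u v) v)"
    using sum.Int_Diff[OF S(2), of "\<lambda>v. scale (u v) v" A] sum_S
    by (simp add: SA_def SB_def eq_neg_iff_add_eq_0)
  have "(\<Sum>v\<in>SA. scale (u v) v) \<in> span A"
    using SA by (intro span_sum span_scale span_base) auto
  moreover have "(\<Sum>v\<in>SA. scale (u v) v) \<in> span B"
    unfolding SA_SB using SB by (intro span_neg span_sum span_scale span_base) auto
  ultimately have "(\<Sum>v\<in>SA. scale (u v) v) = 0" "(\<Sum>v\<in>SB. scale (u v) v) = 0"
    using AB SA_SB by auto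
  then have "\<forall>v\<in>SA. u v = 0" "\<forall>v\<in>SB. u v = 0"
    using A B SA SB by (auto simp: independent_explicit_finite_subsets)
  then show "u v = 0"
    using \<open>v \<in> S\<close> by (auto simp: SA_def SB_def)
qed

lemma card_Un_independent:
  assumes "independent A" "independent B" "span A \<inter> span B \<subseteq> {0}" "finite A" "finite B"
  shows "card (A \<union> B) = card A + card B"
proof -
  have "A \<inter> B = {}"
    using assms(1,3) span_base dependent_zero by blast
  then show ?thesis
    using assms(4,5) by (simp add: card_Un_disjoint)
qed

lemma dim_add_card_independent_le:
  assumes "subspace V" "subspace U" "V \<subseteq> U" "U \<subseteq> span T" "finite T"
    and "independent B" "B \<subseteq> U" "V \<inter> span B \<subseteq> {0}"
  shows "dim V + card B \<le> dim U"
proof -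
  obtain BV where BV: "BV \<subseteq> V" "independent BV" "V \<subseteq> span BV" "card BV = dim V"
    by (rule basis_exists)
  obtain BU where BU: "BU \<subseteq> U" "independent BU" "U \<subseteq> span BU" "card BU = dim U"
    by (rule basis_exists)
  have "finite BU"
    using independent_span_bound[OF assms(5) BU(2)] BU(1) assms(4) by auto
  have "span BV \<inter> span B \<subseteq> {0}"
    using BV(1) assms(1,8) span_minimal by blast
  then have indep: "independent (BV \<union> B)"
    using BV(2) assms(6) by (rule independent_Un[rotated 2])
  have "BV \<union> B \<subseteq> span BU"
    using BV(1) BU(3) assms(3,7) by blast
  then have "finite (BV \<union> B)" "card (BV \<union> B) \<le> card BU"
    using independent_span_bound[OF \<open>finite BU\<close> indep] by auto
  moreover have "card (BV \<union> B) = card BV + card B"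
    using \<open>finite (BV \<union> B)\<close> \<open>span BV \<inter> span B \<subseteq> {0}\<close> BV(2) assms(6)
    by (intro card_Un_independent) auto
  ultimately show ?thesis
    using BV(4) BU(4) by simp
qed

end

interpretation F: vector_space fscale
  by (rule vector_space_fscale)

definition monom_fun :: "('n \<Rightarrow> nat) \<Rightarrow> complex^'n \<Rightarrow> complex" where
  "monom_fun \<alpha> = (\<lambda>z. \<Prod>i\<in>UNIV. (z $ i) ^ (\<alpha> i))"

definition poly_funs :: "'n set \<Rightarrow> nat \<Rightarrow> (complex^'n \<Rightarrow> complex) set" where
  "poly_funs S m = F.span (monom_fun ` {\<alpha>. sum \<alpha> UNIV \<le> m \<and> (\<forall>i. i \<notin> S \<longrightarrow> \<alpha> i = 0)})"

definition coord_times :: "'n \<Rightarrow> (complex^'n \<Rightarrow> complex) \<Rightarrow> complex^'n \<Rightarrow> complex" where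
  "coord_times k f = (\<lambda>z. z $ k * f z)"

lemma subspace_poly_funs: "F.subspace (poly_funs S m)"
  by (simp add: poly_funs_def)

lemma poly_funs_mono: "S \<subseteq> T \<Longrightarrow> m \<le> m' \<Longrightarrow> poly_funs S m \<subseteq> poly_funs T m'"
  unfolding poly_funs_def by (intro F.span_mono image_mono) auto

lemma sum_fun_apply: "(\<Sum>x\<in>A. f x) z = (\<Sum>x\<in>A. f x z)"
  by (induction A rule: infinite_finite_induct) auto

lemma finite_degree_le: "finite {\<alpha>::'n::finite \<Rightarrow> nat. sum \<alpha> UNIV \<le> d}"
proof (rule finite_subset)
  have "\<alpha> i \<le> d" if "sum \<alpha> UNIV \<le> d" for \<alpha> :: "'n \<Rightarrow> nat" and i
    using that member_le_sum[of i UNIV \<alpha>] by simp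
  then show "{\<alpha>::'n \<Rightarrow> nat. sum \<alpha> UNIV \<le> d} \<subseteq> PiE UNIV (\<lambda>_. {..d})"
    by auto
qed (simp add: finite_PiE)

lemma subspace_Od: "F.subspace (Od d :: (complex^'n \<Rightarrow> complex) set)"
  unfolding F.subspace_def
proof (intro conjI ballI allI)
  show "0 \<in> Od d"
    unfolding Od_def by (intro CollectI exI[of _ "\<lambda>_. 0"]) (simp add: fun_eq_iff)
next
  fix f g :: "complex^'n \<Rightarrow> complex" assume "f \<in> Od d" "g \<in> Od d"
  then obtain a b where "f = (\<lambda>z. \<Sum>\<alpha>\<in>{\<alpha>. sum \<alpha> UNIV \<le> d}. a \<alpha> * monom_fun \<alpha> z)"
      "g = (\<lambda>z. \<Sum>\<alpha>\<in>{\<alpha>. sum \<alpha> UNIV \<le> d}. b \<alpha> * monom_fun \<alpha> z)"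
    unfolding Od_def monom_fun_def by blast
  then show "f + g \<in> Od d"
    unfolding Od_def monom_fun_def
    by (intro CollectI exI[of _ "\<lambda>\<alpha>. a \<alpha> + b \<alpha>"]) (simp add: fun_eq_iff sum.distrib distrib_right)
next
  fix c and f :: "complex^'n \<Rightarrow> complex" assume "f \<in> Od d"
  then obtain a where "f = (\<lambda>z. \<Sum>\<alpha>\<in>{\<alpha>. sum \<alpha> UNIV \<le> d}. a \<alpha> * monom_fun \<alpha> z)"
    unfolding Od_def monom_fun_def by blast
  then show "fscale c f \<in> Od d"
    unfolding Od_def monom_fun_def
    by (intro CollectI exI[of _ "\<lambda>\<alpha>. c * a \<alpha>"]) (simp add: fun_eq_iff fscale_def sum_distrib_left mult.assoc)
qed

lemma Od_eq_poly_funs: "Od d = (poly_funs UNIV d :: (complex^'n \<Rightarrow> complex) set)"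
proof
  show "Od d \<subseteq> poly_funs UNIV d"
  proof
    fix f assume "f \<in> Od d"
    then obtain a where "f = (\<Sum>\<alpha>\<in>{\<alpha>. sum \<alpha> UNIV \<le> d}. fscale (a \<alpha>) (monom_fun \<alpha>))"
      unfolding Od_def by (auto simp: fun_eq_iff sum_fun_apply fscale_def monom_fun_def)
    also have "\<dots> \<in> poly_funs UNIV d"
      unfolding poly_funs_def by (intro F.span_sum F.span_scale F.span_base) auto
    finally show "f \<in> poly_funs UNIV d" .
  qed
next
  show "poly_funs UNIV d \<subseteq> (Od d :: (complex^'n \<Rightarrow> complex) set)"
    unfolding poly_funs_def
  proof (intro F.span_minimal subspace_Od image_subsetI)
    fix \<beta> :: "'n \<Rightarrow> nat" assume "\<beta> \<in> {\<alpha>. sum \<alpha> UNIV \<le> d \<and> (\<forall>i. i \<notin> UNIV \<longrightarrow> \<alpha> i = 0)}"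
    then show "monom_fun \<beta> \<in> Od d"
      unfolding Od_def monom_fun_def
      by (intro CollectI exI[of _ "\<lambda>\<alpha>. of_bool (\<alpha> = \<beta>)"] ext) (simp add: finite_degree_le sum.delta)
  qed
qed

lemma monom_fun_on_line:
  "monom_fun \<alpha> (w + t *s v) = poly (\<Prod>i\<in>UNIV. [:w $ i, v $ i:] ^ \<alpha> i) t"
  by (simp add: monom_fun_def poly_prod algebra_simps)

lemma poly_funs_on_line:
  assumes "f \<in> poly_funs S m"
  shows "\<exists>p. \<forall>t. f (w + t *s v) = poly p t"
  using assms unfolding poly_funs_def
proof (induction rule: F.span_induct_alt)
  case base
  show ?case
    by (auto intro: exI[of _ 0])
next
  case (step c g h)
  then obtain \<alpha> p where "g = monom_fun \<alpha>" "\<forall>t. h (w + t *s v) = poly p t"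
    by auto
  then show ?case
    by (intro exI[of _ "smult c (\<Prod>i\<in>UNIV. [:w $ i, v $ i:] ^ \<alpha> i) + p"])
       (simp add: fscale_def monom_fun_on_line)
qed

lemma poly_funs_zero_on_line:
  assumes "f \<in> poly_funs S m" and "infinite {t. f (w + t *s v) = 0}"
  shows "f (w + t *s v) = 0"
proof -
  obtain p where p: "\<And>t. f (w + t *s v) = poly p t"
    using poly_funs_on_line[OF assms(1)] by blast
  then have "p = 0"
    using assms(2) poly_roots_finite by fastforce
  then show ?thesis
    using p by simp
qed

lemma poly_funs_eq_0_if_zero_off_hyperplane:
  fixes f :: "complex^'n \<Rightarrow> complex"
  assumes "f \<in> poly_funs S m" and "\<And>z. z $ k \<noteq> 0 \<Longrightarrow> f z = 0"
  shows "f = 0"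
proof
  fix z :: "complex^'n"
  have "UNIV - {- z $ k} \<subseteq> {t. f (z + t *s axis k 1) = 0}"
    using assms(2) by (auto simp: add_eq_0_iff)
  moreover have "infinite (UNIV - {- z $ k})"
    by (simp add: infinite_UNIV_char_0)
  ultimately have "f (z + 0 *s axis k 1) = 0"
    using poly_funs_zero_on_line[OF assms(1)] finite_subset by blast
  then show "f z = 0 z"
    by simp
qed

lemma translation_invariant_poly_funs_eq_0:
  fixes f :: "complex^'n \<Rightarrow> complex"
  assumes "f \<in> poly_funs S m" and "\<And>z. f (z + c) = f z" and "c $ k \<noteq> 0"
    and "\<And>z. z $ k = 0 \<Longrightarrow> f z = 0"
  shows "f = 0"
proof
  fix z :: "complex^'n"
  define w where "w = z - (z $ k / c $ k) *s c"
  have "f (w + of_nat j *s c) = 0" for j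
  proof (induction j)
    case 0
    show ?case
      using assms(3,4) by (simp add: w_def)
  next
    case (Suc j)
    have "w + of_nat (Suc j) *s c = (w + of_nat j *s c) + c"
      by (simp add: vector_sadd_rdistrib algebra_simps)
    then show ?case
      using assms(2) Suc.IH by metis
  qed
  then have "range of_nat \<subseteq> {t. f (w + t *s c) = 0}"
    by auto
  then have "infinite {t. f (w + t *s c) = 0}"
    using finite_subset range_inj_infinite[OF inj_of_nat] by blast
  then have "f (w + (z $ k / c $ k) *s c) = 0"
    by (rule poly_funs_zero_on_line[OF assms(1)])
  then show "f z = 0 z"
    by (simp add: w_def)
qed

lemma module_hom_coord_times: "module_hom fscale fscale (coord_times k)"
  by (simp add: module_hom_iff F.module_axioms coord_times_def fscale_def fun_eq_iff algebra_simps)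

lemma coord_times_monom_fun:
  fixes \<alpha> :: "'n::finite \<Rightarrow> nat"
  shows "coord_times k (monom_fun \<alpha>) = monom_fun (\<lambda>i. \<alpha> i + of_bool (i = k))"
proof
  fix z :: "complex^'n"
  have "(\<Prod>i\<in>UNIV. z $ i ^ of_bool (i = k)) = (\<Prod>i\<in>UNIV. if i = k then z $ i else 1)"
    by (rule prod.cong) auto
  then show "coord_times k (monom_fun \<alpha>) z = monom_fun (\<lambda>i. \<alpha> i + of_bool (i = k)) z"
    by (simp add: monom_fun_def coord_times_def power_add prod.distrib)
qed

lemma coord_times_poly_funs:
  fixes S :: "'n::finite set"
  assumes "k \<in> S"
  shows "coord_times k ` poly_funs S m \<subseteq> poly_funs S (Suc m)"
proof -
  let ?M = "\<lambda>m. {\<alpha>. sum \<alpha> UNIV \<le> m \<and> (\<forall>i. i \<notin> S \<longrightarrow> \<alpha> i = 0)}"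
  have "coord_times k (monom_fun \<alpha>) \<in> monom_fun ` ?M (Suc m)" if "\<alpha> \<in> ?M m" for \<alpha>
  proof -
    have "sum (\<lambda>i. \<alpha> i + of_bool (i = k)) UNIV = Suc (sum \<alpha> UNIV)"
      by (simp add: sum.distrib)
    then show ?thesis
      using that assms by (auto simp: coord_times_monom_fun)
  qed
  then have "coord_times k ` monom_fun ` ?M m \<subseteq> monom_fun ` ?M (Suc m)"
    by blast
  then show ?thesis
    unfolding poly_funs_def module_hom.span_image[OF module_hom_coord_times, symmetric]
    by (rule F.span_mono)
qed

lemma poly_funs_independent_of_coord:
  assumes "k \<notin> S" and "f \<in> poly_funs S m"
  shows "f z = f (\<chi> i. if i = k then 0 else z $ i)"
  using assms(2) unfolding poly_funs_def
proof (induction rule: F.span_induct_alt)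
  case (step c g h)
  then obtain \<alpha> where g: "g = monom_fun \<alpha>" and "\<alpha> k = 0"
    using assms(1) by auto
  then have "g z = g (\<chi> i. if i = k then 0 else z $ i)"
    unfolding g monom_fun_def by (intro prod.cong) auto
  then show ?case
    using step.IH by (simp add: fscale_def)
qed simp

lemma poly_funs_Int_coord_times_image:
  assumes "k \<notin> S"
  shows "poly_funs S m \<inter> coord_times k ` U \<subseteq> {0}"
proof safe
  fix f assume "coord_times k f \<in> poly_funs S m"
  show "coord_times k f = 0"
  proof
    fix z
    have "coord_times k f z = coord_times k f (\<chi> i. if i = k then 0 else z $ i)"
      using poly_funs_independent_of_coord[OF assms \<open>coord_times k f \<in> poly_funs S m\<close>] .
    then show "coord_times k f z = 0 z"
      by (simp add: coord_times_def)
  qed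
qed

lemma inj_on_coord_times: "inj_on (coord_times k) (poly_funs S m)"
  unfolding module_hom.inj_on_iff_eq_0[OF module_hom_coord_times subspace_poly_funs]
proof (intro ballI impI)
  fix f assume "f \<in> poly_funs S m" "coord_times k f = 0"
  then show "f = 0"
    by (elim poly_funs_eq_0_if_zero_off_hyperplane) (auto simp: coord_times_def fun_eq_iff)
qed

lemma independent_coord_times_image:
  assumes "F.independent B" and "B \<subseteq> poly_funs S m"
  shows "F.independent (coord_times k ` B)" and "card (coord_times k ` B) = card B"
proof -
  have "F.span B \<subseteq> poly_funs S m"
    using assms(2) F.span_minimal subspace_poly_funs by blast
  then have "inj_on (coord_times k) (F.span B)"
    using inj_on_coord_times inj_on_subset by blast
  then show "F.independent (coord_times k ` B)"
    using module_hom.independent_injective_image[OF module_hom_coord_times assms(1)] by blast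
  show "card (coord_times k ` B) = card B"
    using inj_on_coord_times assms(2) by (intro card_image) (rule inj_on_subset)
qed

lemma ex_independent_poly_funs:
  fixes S :: "'n::finite set"
  shows "\<exists>B. finite B \<and> B \<subseteq> poly_funs S m \<and> F.independent B \<and> card B = (card S + m choose m)"
proof -
  have constant_basis: "\<exists>B. finite B \<and> B \<subseteq> poly_funs T m \<and> F.independent B \<and> card B = 1" for T :: "'n set" and m
  proof (intro exI conjI)
    show "{monom_fun (\<lambda>_. 0)} \<subseteq> poly_funs T m"
      unfolding poly_funs_def by (auto intro: F.span_base)
    have "monom_fun (\<lambda>_. 0) \<noteq> (0 :: complex^'n \<Rightarrow> complex)"
      by (auto simp: monom_fun_def fun_eq_iff)
    then show "F.independent {monom_fun (\<lambda>_. 0) :: complex^'n \<Rightarrow> complex}"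
      by simp
  qed auto
  show ?thesis
  proof (induction S arbitrary: m rule: finite_induct[OF finite])
    case 1
    show ?case using constant_basis by simp
  next
    case (2 k S)
    show ?case
    proof (induction m)
      case 0
      show ?case using constant_basis by simp
    next
      case (Suc m)
      obtain B1 where B1: "finite B1" "B1 \<subseteq> poly_funs S (Suc m)" "F.independent B1"
        "card B1 = (card S + Suc m choose Suc m)"
        using "2.IH" by blast
      obtain B2 where B2: "finite B2" "B2 \<subseteq> poly_funs (insert k S) m" "F.independent B2"
        "card B2 = (card (insert k S) + m choose m)"
        using Suc.IH by blast
      let ?B = "B1 \<union> coord_times k ` B2"
      have indep2: "F.independent (coord_times k ` B2)" and card2: "card (coord_times k ` B2) = card B2"
        using independent_coord_times_image[OF B2(3,2)] by blast+
      have "F.span B1 \<subseteq> poly_funs S (Suc m)"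
        using B1(2) F.span_minimal subspace_poly_funs by blast
      then have spans: "F.span B1 \<inter> F.span (coord_times k ` B2) \<subseteq> {0}"
        using poly_funs_Int_coord_times_image[OF "2.hyps"(2), of "Suc m" "F.span B2"]
        by (auto simp: module_hom.span_image[OF module_hom_coord_times])
      have "?B \<subseteq> poly_funs (insert k S) (Suc m)"
        using B1(2) B2(2) poly_funs_mono[of S "insert k S" "Suc m" "Suc m"]
          coord_times_poly_funs[of k "insert k S" m] by blast
      moreover have "F.independent ?B"
        using B1(3) indep2 spans by (rule F.independent_Un)
      moreover have "card ?B = (card (insert k S) + Suc m choose Suc m)"
      proof -
        have "card ?B = card B1 + card B2"
          using F.card_Un_independent[OF B1(3) indep2 spans B1(1)] B2(1) card2 by simp
        then show ?thesis
          using B1(4) B2(4) "2.hyps" by simp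
      qed
      ultimately show ?case
        using B1(1) B2(1) by (intro exI[of _ ?B]) auto
    qed
  qed
qed

lemma dim_translation_invariant_le:
  fixes c :: "complex^'n" and V :: "(complex^'n \<Rightarrow> complex) set"
  assumes "c \<noteq> 0" and "d \<ge> 1" and "F.subspace V" and "V \<subseteq> Od d"
    and "\<forall>g\<in>V. \<forall>z. g (z + c) = g z"
  shows "F.dim V + (CARD('n) + d - 1 choose (d - 1)) \<le> F.dim (Od d :: (complex^'n \<Rightarrow> complex) set)"
proof -
  obtain k where k: "c $ k \<noteq> 0"
    using assms(1) by (auto simp: vec_eq_iff)
  obtain B :: "(complex^'n \<Rightarrow> complex) set"
    where B: "B \<subseteq> poly_funs UNIV (d - 1)" "F.independent B"
      "card B = (CARD('n) + (d - 1) choose (d - 1))"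
    using ex_independent_poly_funs[of "UNIV :: 'n set" "d - 1"] by auto
  let ?W = "coord_times k ` B"
  have W: "F.independent ?W" "card ?W = card B"
    using independent_coord_times_image[OF B(2,1)] by blast+
  have W_Od: "?W \<subseteq> Od d"
    using image_mono[OF B(1), of "coord_times k"] coord_times_poly_funs[of k UNIV "d - 1"] assms(2)
    by (simp add: Od_eq_poly_funs)
  have V_W: "V \<inter> F.span ?W \<subseteq> {0}"
    unfolding module_hom.span_image[OF module_hom_coord_times]
  proof safe
    fix f assume "coord_times k f \<in> V" "f \<in> F.span B"
    then show "coord_times k f = 0"
      using assms(4,5) k
      by (intro translation_invariant_poly_funs_eq_0[of _ UNIV d c k])
         (auto simp: Od_eq_poly_funs coord_times_def)
  qed
  have Od_span: "Od d \<subseteq> F.span (monom_fun ` {\<alpha>. sum \<alpha> UNIV \<le> d})"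
    by (auto simp: Od_eq_poly_funs poly_funs_def)
  have "F.dim V + card ?W \<le> F.dim (Od d :: (complex^'n \<Rightarrow> complex) set)"
    by (rule F.dim_add_card_independent_le[OF assms(3) subspace_Od assms(4) Od_span
          finite_imageI[OF finite_degree_le] W(1) W_Od V_W])
  then show ?thesis
    using W(2) B(3) assms(2) by simp
qed

theorem lemma4p2:
  fixes c :: "complex^'n" and d :: nat and V :: "(complex^'n \<Rightarrow> complex) set"
  assumes "d \<ge> 1"
    and "module.subspace fscale V"
    and "V \<subseteq> Od d"
    and "\<forall>g\<in>V. \<forall>z. g (z + c) = g z"
    and "vector_space.dim fscale V \<ge>
           vector_space.dim fscale (Od d :: (complex^'n \<Rightarrow> complex) set)
           - (CARD('n) + d - 1 choose (d - 1)) + 1"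
  shows "c = 0"
proof (rule ccontr)
  assume "c \<noteq> 0"
  then have "F.dim V + (CARD('n) + d - 1 choose (d - 1)) \<le> F.dim (Od d :: (complex^'n \<Rightarrow> complex) set)"
    using assms(1-4) by (rule dim_translation_invariant_le)
  with assms(5) show False
    by linarith
qed

end
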